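(* As subgroups of $SU(3)$, $$D(9,1,1;2,1,1)\subsetneq D(9,1,1;2,0,1)=D(9,1,1;2,0,0)=D(18,1,1;2,1,1)=D(18,1,1;2,0,0)=D(18,1,1;2,0,1).$$ In particular all five groups on the right are isomorphic to $Fr(162\times 4)$.
   Context: For a positive integer $n$ and integers $a,b$, let $\eta=e^{2i\pi/n}$ and $F(n,a,b)=\mathrm{diag}(\eta^a,\eta^b,\eta^{-a-b})$. For a positive integer $d$ and integers $r,s$, let $\delta=e^{2i\pi/d}$ and $\tilde G(d,r,s)=\begin{pmatrix}\delta^r&0&0\\0&0&\delta^s\\0&-\delta^{-r-s}&0\end{pmatrix}$. Let $E=\begin{pmatrix}0&1&0\\0&0&1\\1&0&0\end{pmatrix}$ and $D(n,a,b;d,r,s)=\langle F(n,a,b),E,\tilde G(d,r,s)\rangle\subset SU(3)$. Let $\omega=e^{2i\pi/3}$, $J$ the antidiagonal matrix with antidiagonal entries $1$, $G_1=\mathrm{diag}(e^{7i\pi/9},-e^{4i\pi/9},-e^{7i\pi/9})$, $G_2=\begin{pmatrix}-\tfrac12 e^{4i\pi/9}&\tfrac{1}{\sqrt2}e^{7i\pi/9}&\tfrac12 e^{4i\pi/9}\\ \tfrac{1}{\sqrt2}e^{7i\pi/9}&0&\tfrac{1}{\sqrt2}e^{7i\pi/9}\\ \tfrac12 e^{4i\pi/9}&\tfrac{1}{\sqrt2}e^{7i\pi/9}&-\tfrac12 e^{4i\pi/9}\end{pmatrix}$, $FUM=-\omega J$, $Fr(162\times 4)=\langle G_1,G_2,FUM\rangle$.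 *)

theory Defs
  imports "HOL-Analysis.Analysis" "HOL-Algebra.Group"
begin

text \<open>3x3 complex matrices are modelled as complex^3^3 (HOL-Analysis),
  with matrix product (**), identity mat 1 and inverse matrix_inv.
  mat3 builds a matrix from its entries given row by row.\<close>

definition mat3 :: "complex \<Rightarrow> complex \<Rightarrow> complex \<Rightarrow> complex \<Rightarrow> complex \<Rightarrow> complex
    \<Rightarrow> complex \<Rightarrow> complex \<Rightarrow> complex \<Rightarrow> complex^3^3" where
  "mat3 a11 a12 a13 a21 a22 a23 a31 a32 a33 =
     (\<chi> i j. if i = 1 then (if j = 1 then a11 else if j = 2 then a12 else a13)
             else if i = 2 then (if j = 1 then a21 else if j = 2 then a22 else a23)
             else (if j = 1 then a31 else if j = 2 then a32 else a33))"

inductive_set gen_group :: "(complex^3^3) set \<Rightarrow> (complex^3^3) set" for S where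
  gen_one: "mat 1 \<in> gen_group S"
| gen_base: "A \<in> S \<Longrightarrow> A \<in> gen_group S"
| gen_mult: "A \<in> gen_group S \<Longrightarrow> B \<in> gen_group S \<Longrightarrow> A ** B \<in> gen_group S"
| gen_inv: "A \<in> gen_group S \<Longrightarrow> matrix_inv A \<in> gen_group S"

definition matgrp :: "(complex^3^3) set \<Rightarrow> (complex^3^3) monoid" where
  "matgrp H = \<lparr>carrier = H, mult = (**), one = mat 1\<rparr>"

definition root_of_unity :: "int \<Rightarrow> complex" where
  "root_of_unity n = exp (2 * pi * \<i> / of_int n)"

definition Fmat :: "int \<Rightarrow> int \<Rightarrow> int \<Rightarrow> complex^3^3" where
  "Fmat n a b = (let \<eta> = root_of_unity n in
     mat3 (\<eta> powi a) 0 0  0 (\<eta> powi b) 0  0 0 (\<eta> powi (- a - b)))"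

definition Gtilde :: "int \<Rightarrow> int \<Rightarrow> int \<Rightarrow> complex^3^3" where
  "Gtilde d r s = (let \<delta> = root_of_unity d in
     mat3 (\<delta> powi r) 0 0  0 0 (\<delta> powi s)  0 (- (\<delta> powi (- r - s))) 0)"

definition Emat :: "complex^3^3" where
  "Emat = mat3 0 1 0  0 0 1  1 0 0"

definition Dgrp :: "int \<Rightarrow> int \<Rightarrow> int \<Rightarrow> int \<Rightarrow> int \<Rightarrow> int \<Rightarrow> (complex^3^3) set" where
  "Dgrp n a b d r s = gen_group {Fmat n a b, Emat, Gtilde d r s}"

definition omega :: complex where
  "omega = exp (2 * pi * \<i> / 3)"

definition Jmat :: "complex^3^3" where
  "Jmat = mat3 0 0 1  0 1 0  1 0 0"

definition G1 :: "complex^3^3" where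
  "G1 = mat3 (exp (7 * pi * \<i> / 9)) 0 0
             0 (- exp (4 * pi * \<i> / 9)) 0
             0 0 (- exp (7 * pi * \<i> / 9))"

definition G2 :: "complex^3^3" where
  "G2 = (let u = exp (4 * pi * \<i> / 9); v = exp (7 * pi * \<i> / 9);
             h = complex_of_real (1/2); q = complex_of_real (1 / sqrt 2) in
     mat3 (- h * u) (q * v) (h * u)
          (q * v) 0 (q * v)
          (h * u) (q * v) (- h * u))"

definition FUM :: "complex^3^3" where
  "FUM = (\<chi> i j. - omega * Jmat $ i $ j)"

definition Fr162x4 :: "(complex^3^3) set" where
  "Fr162x4 = gen_group {G1, G2, FUM}"

end

theory Submission
  imports Defs
begin

text \<open>All matrices involved are monomial with entries among the 18th roots of unity
  \<open>zeta k = exp (k\<pi>i/9)\<close>, so every group identity reduces to an explicit word in the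
  generators, checked by multiplying 3x3 matrices; a cycle of inclusions makes the last five groups
  equal. The first group is strictly smaller because all its elements are monomial matrices whose
  nonzero entries share the same 9th power, whereas \<open>Gtilde 2 0 1\<close> has the entries 1 and -1.
  Finally, the rotation \<open>Rot\<close> by \<open>\<pi>/4\<close> in the \<open>(e\<^sub>1,e\<^sub>3)\<close>-plane conjugates generators
  \<open>M1, M2, M3\<close> of \<open>D(18,1,1;2,1,1)\<close> into \<open>G1, G2, FUM\<close>, so conjugation by \<open>Rot\<close> is an
  isomorphism onto \<open>Fr(162\<times>4)\<close>.\<close>

lemma matrix_inv_inverse:
  fixes A :: "'a::semiring_1^'n^'n"
  assumes "invertible A"
  shows "A ** matrix_inv A = mat 1" "matrix_inv A ** A = mat 1"
  using someI_ex[OF assms[unfolded invertible_def]] unfolding matrix_inv_def by blast+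

lemma matrix_inv_cancel:
  fixes A Y :: "'a::semiring_1^'n^'n"
  assumes "invertible A"
  shows "A ** (matrix_inv A ** Y) = Y" "matrix_inv A ** (A ** Y) = Y"
  using matrix_inv_inverse[OF assms] by (simp_all add: matrix_mul_assoc)

lemma matrix_inv_unique:
  fixes A B :: "'a::semiring_1^'n^'n"
  assumes AB: "A ** B = mat 1" and BA: "B ** A = mat 1"
  shows "matrix_inv A = B"
proof -
  have inv: "invertible A" using AB BA unfolding invertible_def by blast
  have "matrix_inv A = matrix_inv A ** (A ** B)" by (simp add: AB)
  also have "\<dots> = B" by (simp add: matrix_mul_assoc matrix_inv_inverse[OF inv])
  finally show ?thesis .
qed

lemma invertible_matrix_inv:
  fixes A :: "'a::semiring_1^'n^'n"
  assumes "invertible A"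
  shows "invertible (matrix_inv A)"
  using matrix_inv_inverse[OF assms] unfolding invertible_def by blast

definition matrix_conj :: "'a::semiring_1^'n^'n \<Rightarrow> 'a^'n^'n \<Rightarrow> 'a^'n^'n" where
  "matrix_conj H X = H ** X ** matrix_inv H"

lemma matrix_conj_mult:
  assumes "invertible H"
  shows "matrix_conj H (A ** B) = matrix_conj H A ** matrix_conj H B"
  unfolding matrix_conj_def by (simp add: matrix_mul_assoc[symmetric] matrix_inv_cancel[OF assms])

lemma matrix_conj_one: "invertible H \<Longrightarrow> matrix_conj H (mat 1) = mat 1"
  unfolding matrix_conj_def by (simp add: matrix_inv_inverse)

lemma matrix_inv_matrix_conj:
  assumes "invertible H" "invertible X"
  shows "matrix_inv (matrix_conj H X) = matrix_conj H (matrix_inv X)"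
  unfolding matrix_conj_def
proof (rule matrix_inv_unique)
  note cancel = matrix_inv_cancel[OF assms(1)] matrix_inv_cancel[OF assms(2)]
    matrix_inv_inverse[OF assms(1)]
  show "H ** X ** matrix_inv H ** (H ** matrix_inv X ** matrix_inv H) = mat 1"
    by (simp add: matrix_mul_assoc[symmetric] cancel)
  show "H ** matrix_inv X ** matrix_inv H ** (H ** X ** matrix_inv H) = mat 1"
    by (simp add: matrix_mul_assoc[symmetric] cancel)
qed

lemma inj_matrix_conj:
  assumes "invertible H"
  shows "inj (matrix_conj H)"
proof (rule inj_on_inverseI)
  fix X show "matrix_inv H ** matrix_conj H X ** H = X"
    unfolding matrix_conj_def
    by (simp add: matrix_mul_assoc[symmetric] matrix_inv_cancel[OF assms])
      (simp add: matrix_mul_assoc matrix_inv_inverse[OF assms])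
qed

lemma gen_group_least:
  assumes "S \<subseteq> P" "mat 1 \<in> P"
    and "\<And>A B. A \<in> P \<Longrightarrow> B \<in> P \<Longrightarrow> A ** B \<in> P"
    and "\<And>A. A \<in> P \<Longrightarrow> matrix_inv A \<in> P"
  shows "gen_group S \<subseteq> P"
proof
  fix A assume "A \<in> gen_group S"
  then show "A \<in> P" by induction (use assms in auto)
qed

lemma gen_group_subset_gen_group:
  assumes "S \<subseteq> gen_group T"
  shows "gen_group S \<subseteq> gen_group T"
  using assms by (intro gen_group_least) (auto intro: gen_group.intros)

lemma gen_group_invertible:
  assumes "S \<subseteq> Collect invertible"
  shows "gen_group S \<subseteq> Collect invertible"
proof (rule gen_group_least[OF assms])
  show "mat 1 \<in> Collect invertible"
    unfolding invertible_def by (auto intro: matrix_mul_lid)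
qed (auto intro: invertible_mult invertible_matrix_inv)

lemma gen_group_conj:
  assumes H: "invertible H" and S: "S \<subseteq> Collect invertible"
  shows "gen_group (matrix_conj H ` S) = matrix_conj H ` gen_group S"
proof
  note c_mult = matrix_conj_mult[OF H] and c_one = matrix_conj_one[OF H]
  have inv: "gen_group S \<subseteq> Collect invertible" by (rule gen_group_invertible[OF S])
  show "gen_group (matrix_conj H ` S) \<subseteq> matrix_conj H ` gen_group S"
  proof (rule gen_group_least)
    show "matrix_conj H ` S \<subseteq> matrix_conj H ` gen_group S" by (auto intro: gen_group.gen_base)
    show "mat 1 \<in> matrix_conj H ` gen_group S" using c_one gen_group.gen_one by (metis image_eqI)
    show "A ** B \<in> matrix_conj H ` gen_group S"
      if "A \<in> matrix_conj H ` gen_group S" "B \<in> matrix_conj H ` gen_group S" for A B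
      using that by (auto simp flip: c_mult intro: gen_group.gen_mult)
    show "matrix_inv A \<in> matrix_conj H ` gen_group S" if "A \<in> matrix_conj H ` gen_group S" for A
      using that inv matrix_inv_matrix_conj[OF H] by (auto intro: gen_group.gen_inv)
  qed
  show "matrix_conj H ` gen_group S \<subseteq> gen_group (matrix_conj H ` S)"
  proof
    fix A assume "A \<in> matrix_conj H ` gen_group S"
    then obtain X where "X \<in> gen_group S" "A = matrix_conj H X" by blast
    then show "A \<in> gen_group (matrix_conj H ` S)"
    proof (induction X arbitrary: A)
      case gen_one then show ?case using c_one gen_group.gen_one by simp
    next
      case (gen_base X) then show ?case by (auto intro: gen_group.gen_base)
    next
      case (gen_mult X Y) then show ?case using c_mult by (auto intro: gen_group.gen_mult)
    next
      case (gen_inv X)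
      then have "A = matrix_inv (matrix_conj H X)" using inv matrix_inv_matrix_conj[OF H] by auto
      then show ?case using gen_inv by (auto intro: gen_group.gen_inv)
    qed
  qed
qed

lemma matgrp_conj_iso:
  assumes "invertible H"
  shows "matgrp G \<cong> matgrp (matrix_conj H ` G)"
proof (rule is_isoI, rule isoI)
  show "matrix_conj H \<in> hom (matgrp G) (matgrp (matrix_conj H ` G))"
    by (rule homI) (simp_all add: matgrp_def matrix_conj_mult[OF assms])
  show "bij_betw (matrix_conj H) (carrier (matgrp G)) (carrier (matgrp (matrix_conj H ` G)))"
    using inj_matrix_conj[OF assms]
    by (simp add: matgrp_def bij_betw_def inj_on_subset[OF _ subset_UNIV])
qed

definition monomial_matrix :: "('n \<Rightarrow> 'n) \<Rightarrow> ('n \<Rightarrow> 'a::zero) \<Rightarrow> 'a^'n^'n" where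
  "monomial_matrix \<sigma> f = (\<chi> i j. if j = \<sigma> i then f i else 0)"

lemma monomial_matrix_mult:
  fixes f g :: "'n::finite \<Rightarrow> 'a::semiring_1"
  shows "monomial_matrix \<sigma> f ** monomial_matrix \<tau> g = monomial_matrix (\<tau> \<circ> \<sigma>) (\<lambda>i. f i * g (\<sigma> i))"
proof -
  have "(\<Sum>k\<in>UNIV. (if k = \<sigma> i then f i else 0) * (if j = \<tau> k then g k else 0))
        = (if j = \<tau> (\<sigma> i) then f i * g (\<sigma> i) else 0)" for i j
    by (simp add: if_distrib[of "\<lambda>x. x * _"] sum.delta' cong: if_cong)
  then show ?thesis
    unfolding monomial_matrix_def matrix_matrix_mult_def by (simp add: vec_eq_iff)
qed

lemma monomial_matrix_id: "monomial_matrix id (\<lambda>i. 1) = (mat 1 :: 'a::semiring_1^'n^'n)"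
  unfolding monomial_matrix_def mat_def by (simp add: vec_eq_iff eq_commute)

definition uniform_monomial :: "nat \<Rightarrow> ('a::field^'n^'n) set" where
  "uniform_monomial m = {monomial_matrix \<sigma> f | \<sigma> f.
     bij \<sigma> \<and> (\<forall>i. f i \<noteq> 0) \<and> (\<forall>i j. f i ^ m = f j ^ m)}"

lemma uniform_monomialI:
  "bij \<sigma> \<Longrightarrow> (\<And>i. f i \<noteq> 0) \<Longrightarrow> (\<And>i j. f i ^ m = f j ^ m)
    \<Longrightarrow> monomial_matrix \<sigma> f \<in> uniform_monomial m"
  unfolding uniform_monomial_def by blast

lemma uniform_monomial_mult:
  fixes A B :: "'a::field^'n::finite^'n"
  assumes "A \<in> uniform_monomial m" "B \<in> uniform_monomial m"
  shows "A ** B \<in> uniform_monomial m"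
proof -
  obtain \<sigma> f \<tau> g where A: "A = monomial_matrix \<sigma> f" "bij \<sigma>" "\<forall>i. f i \<noteq> 0" "\<forall>i j. f i ^ m = f j ^ m"
    and B: "B = monomial_matrix \<tau> g" "bij \<tau>" "\<forall>i. g i \<noteq> 0" "\<forall>i j. g i ^ m = g j ^ m"
    using assms unfolding uniform_monomial_def by blast
  have "monomial_matrix (\<tau> \<circ> \<sigma>) (\<lambda>i. f i * g (\<sigma> i)) \<in> uniform_monomial m"
    using A B by (intro uniform_monomialI) (auto simp: bij_comp power_mult_distrib, metis)
  then show ?thesis using A B by (simp add: monomial_matrix_mult)
qed

lemma uniform_monomial_inverse:
  fixes A :: "'a::field^'n::finite^'n"
  assumes "A \<in> uniform_monomial m"
  obtains B where "B \<in> uniform_monomial m" "A ** B = mat 1" "B ** A = mat 1"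
proof -
  obtain \<sigma> f where A: "A = monomial_matrix \<sigma> f" "bij \<sigma>" "\<forall>i. f i \<noteq> 0" "\<forall>i j. f i ^ m = f j ^ m"
    using assms unfolding uniform_monomial_def by blast
  let ?\<sigma>' = "inv_into UNIV \<sigma>"
  let ?B = "monomial_matrix ?\<sigma>' (\<lambda>i. inverse (f (?\<sigma>' i)))"
  have \<sigma>: "?\<sigma>' \<circ> \<sigma> = id" "\<sigma> \<circ> ?\<sigma>' = id" "\<And>i. ?\<sigma>' (\<sigma> i) = i" "\<And>i. \<sigma> (?\<sigma>' i) = i"
    using A(2) by (auto simp: fun_eq_iff bij_def surj_f_inv_f)
  have "?B \<in> uniform_monomial m"
    using A by (intro uniform_monomialI) (auto simp: bij_imp_bij_inv power_inverse)
  moreover have "A ** ?B = mat 1" "?B ** A = mat 1"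
    using A(3) by (simp_all add: A(1) monomial_matrix_mult \<sigma> flip: monomial_matrix_id)
  ultimately show thesis by (rule that)
qed

lemma uniform_monomial_invertible: "uniform_monomial m \<subseteq> Collect (invertible :: 'a::field^'n::finite^'n \<Rightarrow> bool)"
  using uniform_monomial_inverse unfolding invertible_def by blast

lemma gen_group_uniform_monomial:
  assumes "S \<subseteq> uniform_monomial m"
  shows "gen_group S \<subseteq> uniform_monomial m"
proof (rule gen_group_least[OF assms])
  show "mat 1 \<in> uniform_monomial m"
    by (subst monomial_matrix_id[symmetric]) (rule uniform_monomialI, simp_all)
  show "matrix_inv A \<in> uniform_monomial m" if "A \<in> uniform_monomial m" for A
    using uniform_monomial_inverse[OF that] matrix_inv_unique by metis
qed (rule uniform_monomial_mult)

lemma uniform_monomial_entries: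
  fixes A :: "'a::field^'n::finite^'n"
  assumes "A \<in> uniform_monomial m" "A $ i $ j \<noteq> 0" "A $ k $ l \<noteq> 0"
  shows "(A $ i $ j) ^ m = (A $ k $ l) ^ m"
  using assms unfolding uniform_monomial_def monomial_matrix_def by (auto split: if_splits)

text \<open>On the index type \<open>3\<close>, \<open>\<lambda>i. i + 1\<close> is the cycle \<open>1 \<mapsto> 2 \<mapsto> 3 \<mapsto> 1\<close> and \<open>\<lambda>i. 2 - i\<close> swaps
  \<open>2\<close> and \<open>3\<close>.\<close>

lemma mat3_monomial:
  "mat3 a 0 0 0 b 0 0 0 c = monomial_matrix id (\<lambda>i. if i = 1 then a else if i = 2 then b else c)"
  "mat3 0 a 0 0 0 b c 0 0 = monomial_matrix (\<lambda>i. i + 1) (\<lambda>i. if i = 1 then a else if i = 2 then b else c)"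
  "mat3 a 0 0 0 0 b 0 c 0 = monomial_matrix (\<lambda>i. 2 - i) (\<lambda>i. if i = 1 then a else if i = 2 then b else c)"
  unfolding mat3_def monomial_matrix_def by (simp_all add: vec_eq_iff forall_3)

lemma mat3_uniform_monomial:
  assumes "a \<noteq> 0" "b \<noteq> 0" "c \<noteq> 0" "a ^ m = b ^ m" "b ^ m = c ^ m"
  shows "mat3 a 0 0 0 b 0 0 0 c \<in> uniform_monomial m"
    and "mat3 0 a 0 0 0 b c 0 0 \<in> uniform_monomial m"
    and "mat3 a 0 0 0 0 b 0 c 0 \<in> uniform_monomial m"
proof -
  let ?f = "\<lambda>i::3. if i = 1 then a else if i = 2 then b else c"
  have f: "?f i \<noteq> 0" "?f i ^ m = ?f j ^ m" for i j
    using assms by auto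
  have "bij (\<lambda>i::3. i + 1)"
    by (rule bij_betw_byWitness[where f'="\<lambda>i. i - 1"]) auto
  moreover have "bij (\<lambda>i::3. 2 - i)"
    by (rule bij_betw_byWitness[where f'="\<lambda>i. 2 - i"]) auto
  ultimately show "mat3 a 0 0 0 b 0 0 0 c \<in> uniform_monomial m"
    and "mat3 0 a 0 0 0 b c 0 0 \<in> uniform_monomial m"
    and "mat3 a 0 0 0 0 b 0 c 0 \<in> uniform_monomial m"
    unfolding mat3_monomial using f by (auto intro!: uniform_monomialI)
qed

lemma mat3_mult:
  "mat3 a11 a12 a13 a21 a22 a23 a31 a32 a33 ** mat3 b11 b12 b13 b21 b22 b23 b31 b32 b33
  = mat3 (a11*b11+a12*b21+a13*b31) (a11*b12+a12*b22+a13*b32) (a11*b13+a12*b23+a13*b33)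
         (a21*b11+a22*b21+a23*b31) (a21*b12+a22*b22+a23*b32) (a21*b13+a22*b23+a23*b33)
         (a31*b11+a32*b21+a33*b31) (a31*b12+a32*b22+a33*b32) (a31*b13+a32*b23+a33*b33)"
  unfolding mat3_def matrix_matrix_mult_def by (simp add: vec_eq_iff sum_3 forall_3)

lemma mat3_one: "mat 1 = mat3 1 0 0 0 1 0 0 0 1"
  unfolding mat3_def by (simp add: vec_eq_iff forall_3 mat_def)

lemma transpose_mat3:
  "transpose (mat3 a11 a12 a13 a21 a22 a23 a31 a32 a33) = mat3 a11 a21 a31 a12 a22 a32 a13 a23 a33"
  unfolding mat3_def transpose_def by (simp add: vec_eq_iff forall_3)

definition zeta :: "nat \<Rightarrow> complex" where
  "zeta k = exp (of_nat k * pi * \<i> / 9)"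

lemma zeta_add: "zeta (a + b) = zeta a * zeta b"
  unfolding zeta_def by (simp add: distrib_right add_divide_distrib exp_add)

lemma zeta_mod: "zeta (k mod 18) = zeta k"
proof -
  have "zeta (18 * (k div 18)) = exp (of_nat (k div 18) * (2 * pi * \<i>))"
    unfolding zeta_def by (simp add: algebra_simps)
  also have "\<dots> = 1" by (simp add: exp_of_nat_mult)
  finally show ?thesis using zeta_add[of "18 * (k div 18)" "k mod 18"] by simp
qed

lemma zeta_mult: "zeta a * zeta b = zeta ((a + b) mod 18)"
  by (simp add: zeta_mod zeta_add)

lemma zeta_0: "zeta 0 = 1"
  by (simp add: zeta_def)

lemma zeta_9: "zeta 9 = -1"
  by (simp add: zeta_def mult.commute)

lemma zeta_power: "zeta k ^ n = zeta (k * n mod 18)"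
proof -
  have "zeta k ^ n = zeta (k * n)"
    by (induction n) (simp_all add: zeta_0 zeta_add)
  then show ?thesis by (simp add: zeta_mod)
qed

lemma zeta_neq_0: "zeta k \<noteq> 0"
  by (simp add: zeta_def)

lemma uminus_zeta: "- zeta k = zeta ((k + 9) mod 18)"
  by (simp add: zeta_mod zeta_add zeta_9)

lemma inverse_zeta: "k \<le> 18 \<Longrightarrow> inverse (zeta k) = zeta (18 - k)"
  by (rule inverse_unique) (simp add: zeta_mult zeta_0)

lemma root_of_unity_zeta:
  "root_of_unity 2 = -1" "root_of_unity 9 = zeta 2" "root_of_unity 18 = zeta 1"
  unfolding root_of_unity_def zeta_def by (simp_all add: field_simps)

lemma Fmat_zeta:
  "Fmat 9 1 1 = mat3 (zeta 2) 0 0 0 (zeta 2) 0 0 0 (zeta 14)"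
  "Fmat 18 1 1 = mat3 (zeta 1) 0 0 0 (zeta 1) 0 0 0 (zeta 16)"
  unfolding Fmat_def root_of_unity_zeta Let_def
  by (simp_all add: power_int_minus zeta_power inverse_zeta)

lemma Gtilde_zeta:
  "Gtilde 2 1 1 = mat3 (zeta 9) 0 0 0 0 (zeta 9) 0 (zeta 9) 0"
  "Gtilde 2 0 1 = mat3 (zeta 0) 0 0 0 0 (zeta 9) 0 (zeta 0) 0"
  "Gtilde 2 0 0 = mat3 (zeta 0) 0 0 0 0 (zeta 0) 0 (zeta 9) 0"
  unfolding Gtilde_def root_of_unity_zeta Let_def zeta_0 zeta_9
  by (simp_all add: power_int_minus)

lemma Emat_zeta: "Emat = mat3 0 (zeta 0) 0 0 0 (zeta 0) (zeta 0) 0 0"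
  unfolding Emat_def zeta_0 ..

lemma exp_zeta: "exp (4 * pi * \<i> / 9) = zeta 4" "exp (7 * pi * \<i> / 9) = zeta 7"
  by (simp_all add: zeta_def)

lemma G1_zeta: "G1 = mat3 (zeta 7) 0 0 0 (zeta 13) 0 0 0 (zeta 16)"
  unfolding G1_def exp_zeta by (simp add: uminus_zeta)

lemma FUM_zeta: "FUM = mat3 0 0 (zeta 15) 0 (zeta 15) 0 (zeta 15) 0 0"
proof -
  have "omega = zeta 6" unfolding omega_def zeta_def by (simp add: field_simps)
  then show ?thesis
    unfolding FUM_def Jmat_def mat3_def \<open>omega = zeta 6\<close> by (simp add: vec_eq_iff forall_3 uminus_zeta)
qed

definition Rot :: "complex^3^3" where
  "Rot = (let q = complex_of_real (1 / sqrt 2) in mat3 q 0 q 0 1 0 (- q) 0 q)"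

lemma inv_sqrt2_square: "complex_of_real (1 / sqrt 2) * complex_of_real (1 / sqrt 2) = 1 / 2"
  by (simp flip: of_real_mult)

lemma Rot_orthogonal: "Rot ** transpose Rot = mat 1" "transpose Rot ** Rot = mat 1"
proof -
  define q where "q = complex_of_real (1 / sqrt 2)"
  have "q * q = 1 / 2" unfolding q_def by (rule inv_sqrt2_square)
  then have "q * q + q * q = 1" unfolding \<open>q * q = 1 / 2\<close> by simp
  then show "Rot ** transpose Rot = mat 1" "transpose Rot ** Rot = mat 1"
    unfolding Rot_def Let_def q_def[symmetric] transpose_mat3 mat3_mult mat3_one by simp_all
qed

lemma invertible_Rot: "invertible Rot"
  using Rot_orthogonal unfolding invertible_def by blast

lemma matrix_inv_Rot: "matrix_inv Rot = transpose Rot"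
  by (rule matrix_inv_unique) (rule Rot_orthogonal)+

definition M1 :: "complex^3^3" where "M1 = mat3 0 0 (zeta 7) 0 (zeta 13) 0 (zeta 7) 0 0"
definition M2 :: "complex^3^3" where "M2 = mat3 (zeta 13) 0 0 0 0 (zeta 7) 0 (zeta 7) 0"
definition M3 :: "complex^3^3" where "M3 = mat3 (zeta 6) 0 0 0 (zeta 15) 0 0 0 (zeta 15)"

lemma Fr162x4_generators_conj:
  "G1 = matrix_conj Rot M1" "G2 = matrix_conj Rot M2" "FUM = matrix_conj Rot M3"
proof -
  define q where "q = complex_of_real (1 / sqrt 2)"
  have q: "q * q = 1 / 2" unfolding q_def by (rule inv_sqrt2_square)
  then have q': "q * (q * x) = x / 2" for x by (simp add: mult.assoc[symmetric])
  have minus: "zeta 13 = - zeta 4" "zeta 16 = - zeta 7" "zeta 15 = - zeta 6"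
    by (simp_all add: uminus_zeta)
  note defs = Rot_def Let_def q_def[symmetric] transpose_mat3 mat3_mult M1_def M2_def M3_def minus
  show "G1 = matrix_conj Rot M1"
    unfolding matrix_conj_def matrix_inv_Rot unfolding G1_zeta defs by (simp add: algebra_simps q q')
  show "G2 = matrix_conj Rot M2"
    unfolding matrix_conj_def matrix_inv_Rot unfolding G2_def exp_zeta defs by (simp add: algebra_simps q q')
  show "FUM = matrix_conj Rot M3"
    unfolding matrix_conj_def matrix_inv_Rot unfolding FUM_zeta defs by (simp add: algebra_simps q q')
qed

lemmas generators_zeta = Fmat_zeta Gtilde_zeta Emat_zeta M1_def M2_def M3_def

text \<open>The following words were found by breadth-first search in the group of order 648.\<close>

lemma Fmat_9_1_1_word: "Fmat 9 1 1 = Fmat 18 1 1 ** Fmat 18 1 1"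
  by (simp add: generators_zeta mat3_mult zeta_mult numeral_2_eq_2[symmetric])

lemma Fmat_18_1_1_word:
  "Fmat 18 1 1 = Fmat 9 1 1 ** Fmat 9 1 1 ** Fmat 9 1 1 ** Fmat 9 1 1 ** Fmat 9 1 1
     ** Gtilde 2 0 1 ** Emat ** Gtilde 2 0 1 ** Emat"
  by (simp add: generators_zeta mat3_mult zeta_mult numeral_2_eq_2[symmetric])

lemma Gtilde_2_1_1_word: "Gtilde 2 1 1 = Emat ** Gtilde 2 0 1 ** Emat ** Gtilde 2 0 1 ** Gtilde 2 0 1"
  by (simp add: generators_zeta mat3_mult zeta_mult numeral_2_eq_2[symmetric])

lemma Gtilde_2_0_0_word: "Gtilde 2 0 0 = Gtilde 2 0 1 ** Gtilde 2 0 1 ** Gtilde 2 0 1"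
  by (simp add: generators_zeta mat3_mult zeta_mult numeral_2_eq_2[symmetric])

lemma Gtilde_2_0_1_word_Emat: "Gtilde 2 0 1 = Emat ** Gtilde 2 0 0 ** Emat"
  by (simp add: generators_zeta mat3_mult zeta_mult numeral_2_eq_2[symmetric])

lemma Gtilde_2_0_1_word_Fmat:
  "Gtilde 2 0 1 = Fmat 18 1 1 ** Fmat 18 1 1 ** Fmat 18 1 1 ** Fmat 18 1 1 ** Fmat 18 1 1 ** Fmat 18 1 1
     ** Gtilde 2 1 1 ** Fmat 18 1 1 ** Fmat 18 1 1 ** Fmat 18 1 1"
  by (simp add: generators_zeta mat3_mult zeta_mult numeral_2_eq_2[symmetric])

lemma M_words:
  "M1 = Fmat 18 1 1 ** Fmat 18 1 1 ** Emat ** Gtilde 2 1 1 ** Fmat 18 1 1 ** Fmat 18 1 1"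
  "M2 = Fmat 18 1 1 ** Fmat 18 1 1 ** Gtilde 2 1 1 ** Fmat 18 1 1 ** Fmat 18 1 1"
  "M3 = Fmat 18 1 1 ** Fmat 18 1 1 ** Fmat 18 1 1 ** Gtilde 2 1 1
     ** Fmat 18 1 1 ** Fmat 18 1 1 ** Fmat 18 1 1 ** Gtilde 2 1 1"
  by (simp_all add: generators_zeta mat3_mult zeta_mult numeral_2_eq_2[symmetric])

lemma Dgrp_18_generator_words:
  "Fmat 18 1 1 = M1 ** M3 ** M1 ** M2 ** M2"
  "Emat = M1 ** M1 ** M1 ** M2 ** M2 ** M2 ** M3 ** M3"
  "Gtilde 2 1 1 = M2 ** M2 ** M2 ** M3 ** M3 ** M3 ** M3"
  by (simp_all add: generators_zeta mat3_mult zeta_mult numeral_2_eq_2[symmetric])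

lemma Dgrp_generators:
  "Fmat n a b \<in> Dgrp n a b d r s" "Emat \<in> Dgrp n a b d r s" "Gtilde d r s \<in> Dgrp n a b d r s"
  unfolding Dgrp_def by (simp_all add: gen_group.gen_base)

lemma Dgrp_mult: "A \<in> Dgrp n a b d r s \<Longrightarrow> B \<in> Dgrp n a b d r s \<Longrightarrow> A ** B \<in> Dgrp n a b d r s"
  unfolding Dgrp_def by (rule gen_group.gen_mult)

lemma gen_group_subset_Dgrp: "S \<subseteq> Dgrp n a b d r s \<Longrightarrow> gen_group S \<subseteq> Dgrp n a b d r s"
  unfolding Dgrp_def by (rule gen_group_subset_gen_group)

lemma Dgrp_subset_Dgrp:
  assumes "Fmat n a b \<in> Dgrp n' a' b' d' r' s'" "Gtilde d r s \<in> Dgrp n' a' b' d' r' s'"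
  shows "Dgrp n a b d r s \<subseteq> Dgrp n' a' b' d' r' s'"
  unfolding Dgrp_def[of n a b] using assms Dgrp_generators(2)
  by (intro gen_group_subset_Dgrp) auto

lemma Dgrp_generator_words:
  "Gtilde 2 0 1 \<in> Dgrp 9 1 1 2 0 0" "Fmat 9 1 1 \<in> Dgrp 18 1 1 2 0 0"
  "Gtilde 2 0 0 \<in> Dgrp 18 1 1 2 0 1" "Gtilde 2 0 1 \<in> Dgrp 18 1 1 2 1 1"
  "Fmat 18 1 1 \<in> Dgrp 9 1 1 2 0 1" "Gtilde 2 1 1 \<in> Dgrp 9 1 1 2 0 1"
proof -
  note mem = Dgrp_mult Dgrp_generators
  show "Gtilde 2 0 1 \<in> Dgrp 9 1 1 2 0 0" unfolding Gtilde_2_0_1_word_Emat by (intro mem)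
  show "Fmat 9 1 1 \<in> Dgrp 18 1 1 2 0 0" unfolding Fmat_9_1_1_word by (intro mem)
  show "Gtilde 2 0 0 \<in> Dgrp 18 1 1 2 0 1" unfolding Gtilde_2_0_0_word by (intro mem)
  show "Gtilde 2 0 1 \<in> Dgrp 18 1 1 2 1 1" unfolding Gtilde_2_0_1_word_Fmat by (intro mem)
  show "Fmat 18 1 1 \<in> Dgrp 9 1 1 2 0 1" unfolding Fmat_18_1_1_word by (intro mem)
  show "Gtilde 2 1 1 \<in> Dgrp 9 1 1 2 0 1" unfolding Gtilde_2_1_1_word by (intro mem)
qed

lemma Dgrp_inclusion_cycle:
  "Dgrp 9 1 1 2 0 1 \<subseteq> Dgrp 9 1 1 2 0 0" "Dgrp 9 1 1 2 0 0 \<subseteq> Dgrp 18 1 1 2 0 0"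
  "Dgrp 18 1 1 2 0 0 \<subseteq> Dgrp 18 1 1 2 0 1" "Dgrp 18 1 1 2 0 1 \<subseteq> Dgrp 18 1 1 2 1 1"
  "Dgrp 18 1 1 2 1 1 \<subseteq> Dgrp 9 1 1 2 0 1"
  by (intro Dgrp_subset_Dgrp Dgrp_generators Dgrp_generator_words)+

lemma Dgrp_9_1_1_2_1_1_subset: "Dgrp 9 1 1 2 1 1 \<subseteq> Dgrp 9 1 1 2 0 1"
  by (intro Dgrp_subset_Dgrp Dgrp_generators Dgrp_generator_words)

lemma Dgrp_uniform_monomial:
  "Dgrp 9 1 1 2 1 1 \<subseteq> uniform_monomial 9" "Dgrp 18 1 1 2 1 1 \<subseteq> uniform_monomial 18"
proof -
  have "Fmat 9 1 1 \<in> uniform_monomial 9" "Fmat 18 1 1 \<in> uniform_monomial 18"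
    "Gtilde 2 1 1 \<in> uniform_monomial 9" "Gtilde 2 1 1 \<in> uniform_monomial 18"
    "Emat \<in> uniform_monomial m" for m
    unfolding Fmat_zeta Gtilde_zeta Emat_zeta
    by (intro mat3_uniform_monomial; simp add: zeta_neq_0 zeta_power)+
  then show "Dgrp 9 1 1 2 1 1 \<subseteq> uniform_monomial 9" "Dgrp 18 1 1 2 1 1 \<subseteq> uniform_monomial 18"
    unfolding Dgrp_def by (auto intro!: gen_group_uniform_monomial)
qed

lemma Gtilde_2_0_1_not_uniform_monomial: "Gtilde 2 0 1 \<notin> uniform_monomial 9"
proof
  assume "Gtilde 2 0 1 \<in> uniform_monomial 9"
  then have "(Gtilde 2 0 1 $ 1 $ 1) ^ 9 = (Gtilde 2 0 1 $ 2 $ 3) ^ 9"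
    by (rule uniform_monomial_entries) (simp_all add: Gtilde_zeta mat3_def zeta_neq_0)
  then show False by (simp add: Gtilde_zeta mat3_def zeta_power zeta_0 zeta_9)
qed

lemma Dgrp_9_1_1_2_1_1_psubset: "Dgrp 9 1 1 2 1 1 \<subset> Dgrp 9 1 1 2 0 1"
proof (rule psubsetI[OF Dgrp_9_1_1_2_1_1_subset])
  show "Dgrp 9 1 1 2 1 1 \<noteq> Dgrp 9 1 1 2 0 1"
    using Dgrp_uniform_monomial(1) Gtilde_2_0_1_not_uniform_monomial Dgrp_generators(3)
    by (metis subsetD)
qed

lemma Dgrp_18_1_1_2_1_1_eq_M: "Dgrp 18 1 1 2 1 1 = gen_group {M1, M2, M3}"
proof
  have "M \<in> gen_group {M1, M2, M3}" if "M \<in> {M1, M2, M3}" for M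
    using that by (auto intro: gen_group.gen_base)
  then show "Dgrp 18 1 1 2 1 1 \<subseteq> gen_group {M1, M2, M3}"
    unfolding Dgrp_def Dgrp_18_generator_words
    by (intro gen_group_subset_gen_group insert_subsetI empty_subsetI gen_group.gen_mult) auto
  show "gen_group {M1, M2, M3} \<subseteq> Dgrp 18 1 1 2 1 1"
    unfolding M_words
    by (intro gen_group_subset_Dgrp insert_subsetI empty_subsetI Dgrp_mult Dgrp_generators)
qed

lemma Fr162x4_conj_Dgrp: "Fr162x4 = matrix_conj Rot ` Dgrp 18 1 1 2 1 1"
proof -
  have "{M1, M2, M3} \<subseteq> Collect invertible"
    using Dgrp_uniform_monomial(2) uniform_monomial_invertible
    unfolding Dgrp_18_1_1_2_1_1_eq_M by (auto intro: gen_group.gen_base)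
  then show ?thesis
    unfolding Fr162x4_def Fr162x4_generators_conj Dgrp_18_1_1_2_1_1_eq_M
    by (simp add: gen_group_conj[OF invertible_Rot, symmetric])
qed

lemma Dgrp_18_1_1_2_1_1_iso: "matgrp (Dgrp 18 1 1 2 1 1) \<cong> matgrp Fr162x4"
  unfolding Fr162x4_conj_Dgrp by (rule matgrp_conj_iso[OF invertible_Rot])

theorem theorem10:
  shows "Dgrp 9 1 1 2 1 1 \<subset> Dgrp 9 1 1 2 0 1
       \<and> Dgrp 9 1 1 2 0 1 = Dgrp 9 1 1 2 0 0
       \<and> Dgrp 9 1 1 2 0 0 = Dgrp 18 1 1 2 1 1
       \<and> Dgrp 18 1 1 2 1 1 = Dgrp 18 1 1 2 0 0
       \<and> Dgrp 18 1 1 2 0 0 = Dgrp 18 1 1 2 0 1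
       \<and> matgrp (Dgrp 9 1 1 2 0 1) \<cong> matgrp Fr162x4
       \<and> matgrp (Dgrp 9 1 1 2 0 0) \<cong> matgrp Fr162x4
       \<and> matgrp (Dgrp 18 1 1 2 1 1) \<cong> matgrp Fr162x4
       \<and> matgrp (Dgrp 18 1 1 2 0 0) \<cong> matgrp Fr162x4
       \<and> matgrp (Dgrp 18 1 1 2 0 1) \<cong> matgrp Fr162x4"
proof -
  have "Dgrp 9 1 1 2 0 1 = Dgrp 18 1 1 2 1 1" "Dgrp 9 1 1 2 0 0 = Dgrp 18 1 1 2 1 1"
    "Dgrp 18 1 1 2 0 0 = Dgrp 18 1 1 2 1 1" "Dgrp 18 1 1 2 0 1 = Dgrp 18 1 1 2 1 1"
    using Dgrp_inclusion_cycle by (meson order_trans subset_antisym)+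
  then show ?thesis
    using Dgrp_9_1_1_2_1_1_psubset Dgrp_18_1_1_2_1_1_iso by simp
qed

end
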